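(* For every integer $k\ge 2$, \[u(2^k-1-k,\;2^k-1)=\varepsilon(2^k-1-k,\;2^k-1)=2^{k-1}.\]
   Context: All matrices are binary (entries in $\{0,1\}$). For a nonempty set $S$ of columns of a binary matrix, let $z$ be the sum over the integers of the columns in $S$. $S$ is called $1$-free if no entry of $z$ equals $1$, and even if all entries of $z$ are even. For a binary $m\times n$ matrix $A$ with $m<n$: $\varepsilon(A)$ is the smallest cardinality of a nonempty even set of columns of $A$ (the minimum distance of the code $\{x\in\mathbb F_2^n: Ax=0\}$), and $u(A)$ (the stopping distance) is the smallest cardinality of a nonempty $1$-free set of columns of $A$. For $m<n$, $\varepsilon(m,n)$ and $u(m,n)$ denote the maxima of $\varepsilon(A)$, resp. $u(A)$, over all binary $m\times n$ matrices $A$. *)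

theory Defs
  imports Main
begin

text \<open>A binary m x n matrix is represented as A :: nat => nat => nat, with
  A i j (row i < m, column j < n) in {0,1}; entries outside the range are irrelevant.\<close>

definition binary_matrix :: "nat \<Rightarrow> nat \<Rightarrow> (nat \<Rightarrow> nat \<Rightarrow> nat) \<Rightarrow> bool" where
  "binary_matrix m n A \<longleftrightarrow> (\<forall>i<m. \<forall>j<n. A i j \<in> {0,1})"

definition even_colset :: "nat \<Rightarrow> nat \<Rightarrow> (nat \<Rightarrow> nat \<Rightarrow> nat) \<Rightarrow> nat set \<Rightarrow> bool" where
  "even_colset m n A S \<longleftrightarrow> S \<subseteq> {..<n} \<and> S \<noteq> {} \<and> (\<forall>i<m. even (\<Sum>j\<in>S. A i j))"

definition onefree_colset :: "nat \<Rightarrow> nat \<Rightarrow> (nat \<Rightarrow> nat \<Rightarrow> nat) \<Rightarrow> nat set \<Rightarrow> bool" where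
  "onefree_colset m n A S \<longleftrightarrow> S \<subseteq> {..<n} \<and> S \<noteq> {} \<and> (\<forall>i<m. (\<Sum>j\<in>S. A i j) \<noteq> 1)"

definition eps_mat :: "nat \<Rightarrow> nat \<Rightarrow> (nat \<Rightarrow> nat \<Rightarrow> nat) \<Rightarrow> nat" where
  "eps_mat m n A = Min {card S | S. even_colset m n A S}"

definition u_mat :: "nat \<Rightarrow> nat \<Rightarrow> (nat \<Rightarrow> nat \<Rightarrow> nat) \<Rightarrow> nat" where
  "u_mat m n A = Min {card S | S. onefree_colset m n A S}"

definition eps_max :: "nat \<Rightarrow> nat \<Rightarrow> nat" where
  "eps_max m n = Max {eps_mat m n A | A. binary_matrix m n A}"

definition u_max :: "nat \<Rightarrow> nat \<Rightarrow> nat" where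
  "u_max m n = Max {u_mat m n A | A. binary_matrix m n A}"

end

theory Submission
  imports Defs
begin

text \<open>Upper bound: the even column sets of any A, together with the empty set, form a binary linear
  code with at least 2^(n-m) = n + 1 words, and each column lies in at most half of them. Averaging
  the weights over the nonzero words (Plotkin) yields an even, hence 1-free, set of at most
  (n + 1)/2 = 2^(k-1) columns.

  Lower bound: number the columns 1, ..., 2^k - 1 and take as rows the 2^k - 1 - k triples
  {w, 2^j, w + 2^j} with 1 \<le> w < 2^j < 2^k. Let T be a nonempty 1-free column set and H = 2^(k-1).
  If H \<in> T, the triples {w, H, w + H} force T to meet every pair {w, w + H}, so |T| \<ge> H. Otherwise
  they force T to be invariant under w \<mapsto> w + H, so T is two copies of a nonempty 1-free set of the
  same shape for k - 1, and induction gives |T| \<ge> 2 \<cdot> 2^(k-2).\<close>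

definition syndrome :: "nat \<Rightarrow> (nat \<Rightarrow> nat \<Rightarrow> nat) \<Rightarrow> nat set \<Rightarrow> nat set" where
  "syndrome m A S = {i. i < m \<and> odd (\<Sum>j\<in>S. A i j)}"

text \<open>The kernel of A over GF(2), each codeword represented by its support.\<close>

definition parity_code :: "nat \<Rightarrow> nat \<Rightarrow> (nat \<Rightarrow> nat \<Rightarrow> nat) \<Rightarrow> nat set set" where
  "parity_code m n A = {S. S \<subseteq> {..<n} \<and> syndrome m A S = {}}"

lemma odd_sum_sym_diff:
  fixes f :: "'a \<Rightarrow> nat"
  assumes "finite S" "finite T"
  shows "odd (sum f (sym_diff S T)) \<longleftrightarrow> odd (sum f S) \<noteq> odd (sum f T)"
proof -
  have "sum f (sym_diff S T) = sum f (S - T) + sum f (T - S)"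
    using assms by (intro sum.union_disjoint) auto
  then have "sum f S + sum f T = sum f (sym_diff S T) + 2 * sum f (S \<inter> T)"
    using sum.Int_Diff[OF assms(1), of f T] sum.Int_Diff[OF assms(2), of f S]
    by (simp add: Int_commute)
  then show ?thesis
    by (metis even_add even_mult_iff even_numeral)
qed

lemma syndrome_sym_diff:
  assumes "finite S" "finite T"
  shows "syndrome m A (sym_diff S T) = sym_diff (syndrome m A S) (syndrome m A T)"
  using odd_sum_sym_diff[OF assms] by (auto simp: syndrome_def)

lemma finite_parity_code: "finite (parity_code m n A)"
  by (rule finite_subset[of _ "Pow {..<n}"]) (auto simp: parity_code_def)

lemma empty_in_parity_code: "{} \<in> parity_code m n A"
  by (simp add: parity_code_def syndrome_def)

lemma sym_diff_in_parity_code: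
  assumes "S \<in> parity_code m n A" "T \<in> parity_code m n A"
  shows "sym_diff S T \<in> parity_code m n A"
proof -
  have "finite S" "finite T"
    using assms by (auto simp: parity_code_def intro: finite_subset)
  then show ?thesis
    using assms syndrome_sym_diff[of S T m A] by (auto simp: parity_code_def)
qed

lemma inj_on_sym_diff: "inj_on (\<lambda>S. sym_diff S T) X"
  by (rule inj_onI) auto

lemma card_syndrome_fibre_le:
  "card {S. S \<subseteq> {..<n} \<and> syndrome m A S = y} \<le> card (parity_code m n A)"
proof (cases "\<exists>T. T \<subseteq> {..<n} \<and> syndrome m A T = y")
  case True
  then obtain T where T: "T \<subseteq> {..<n}" "syndrome m A T = y" by blast
  have "(\<lambda>S. sym_diff S T) ` {S. S \<subseteq> {..<n} \<and> syndrome m A S = y} \<subseteq> parity_code m n A"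
  proof (rule image_subsetI)
    fix S assume "S \<in> {S. S \<subseteq> {..<n} \<and> syndrome m A S = y}"
    then have S: "S \<subseteq> {..<n}" "syndrome m A S = y" by simp_all
    have "finite S" "finite T" using S T by (auto intro: finite_subset)
    then show "sym_diff S T \<in> parity_code m n A"
      using S T syndrome_sym_diff[of S T m A] by (auto simp: parity_code_def)
  qed
  then show ?thesis
    by (rule card_inj_on_le[OF inj_on_sym_diff _ finite_parity_code])
next
  case False
  then have "{S. S \<subseteq> {..<n} \<and> syndrome m A S = y} = {}" by blast
  then show ?thesis by (simp only: card.empty zero_le)
qed

lemma card_parity_code_ge:
  assumes "m \<le> n"
  shows "2 ^ (n - m) \<le> card (parity_code m n A)"
proof -
  let ?fibre = "\<lambda>y. {S. S \<subseteq> {..<n} \<and> syndrome m A S = y}"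
  have "Pow {..<n} \<subseteq> (\<Union>y\<in>Pow {..<m}. ?fibre y)"
  proof
    fix S assume "S \<in> Pow {..<n}"
    moreover have "syndrome m A S \<in> Pow {..<m}" by (auto simp: syndrome_def)
    ultimately show "S \<in> (\<Union>y\<in>Pow {..<m}. ?fibre y)" by blast
  qed
  moreover have "finite (\<Union>y\<in>Pow {..<m}. ?fibre y)"
    by (rule finite_subset[of _ "Pow {..<n}"]) auto
  ultimately have "card (Pow {..<n}) \<le> card (\<Union>y\<in>Pow {..<m}. ?fibre y)"
    by (rule card_mono[rotated])
  then have "(2::nat) ^ n \<le> card (\<Union>y\<in>Pow {..<m}. ?fibre y)"
    by (simp add: card_Pow)
  also have "\<dots> \<le> (\<Sum>y\<in>Pow {..<m}. card (?fibre y))"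
    by (rule card_UN_le) simp
  also have "\<dots> \<le> (\<Sum>y\<in>Pow {..<m}. card (parity_code m n A))"
    by (rule sum_mono) (rule card_syndrome_fibre_le)
  also have "\<dots> = 2 ^ m * card (parity_code m n A)"
    by (simp add: card_Pow)
  finally have "2 ^ m * 2 ^ (n - m) \<le> 2 ^ m * card (parity_code m n A)"
    using assms by (simp flip: power_add)
  then show ?thesis by simp
qed

lemma card_parity_code_containing_le:
  "2 * card {S \<in> parity_code m n A. j \<in> S} \<le> card (parity_code m n A)"
proof (cases "\<exists>T \<in> parity_code m n A. j \<in> T")
  case True
  then obtain T where T: "T \<in> parity_code m n A" "j \<in> T" by blast
  let ?with = "{S \<in> parity_code m n A. j \<in> S}" and ?without = "{S \<in> parity_code m n A. j \<notin> S}"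
  have "(\<lambda>S. sym_diff S T) ` ?with \<subseteq> ?without"
  proof (rule image_subsetI)
    fix S assume "S \<in> ?with"
    then have "sym_diff S T \<in> parity_code m n A" "j \<notin> sym_diff S T"
      using T sym_diff_in_parity_code by auto
    then show "sym_diff S T \<in> ?without" by simp
  qed
  then have "card ?with \<le> card ?without"
    by (rule card_inj_on_le[OF inj_on_sym_diff]) (simp add: finite_parity_code)
  moreover have "card ?with + card ?without = card (?with \<union> ?without)"
    by (rule card_Un_disjoint[symmetric]) (auto simp: finite_parity_code)
  moreover have "?with \<union> ?without = parity_code m n A" by blast
  ultimately show ?thesis by simp
next
  case False
  then have "{S \<in> parity_code m n A. j \<in> S} = {}" by blast
  then show ?thesis by (simp only: card.empty mult_0_right zero_le)
qed

lemma sum_card_parity_code_le: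
  "2 * (\<Sum>S\<in>parity_code m n A. card S) \<le> n * card (parity_code m n A)"
proof -
  have "(\<Sum>S\<in>parity_code m n A. card S) = (\<Sum>S\<in>parity_code m n A. \<Sum>j<n. if j \<in> S then 1 else 0)"
  proof (rule sum.cong[OF refl])
    fix S assume "S \<in> parity_code m n A"
    then have "S = {j \<in> {..<n}. j \<in> S}" by (auto simp: parity_code_def)
    then show "card S = (\<Sum>j<n. if j \<in> S then 1 else 0)"
      by (simp add: sum.inter_filter[symmetric])
  qed
  also have "\<dots> = (\<Sum>j<n. \<Sum>S\<in>parity_code m n A. if j \<in> S then 1 else 0)"
    by (rule sum.swap)
  also have "\<dots> = (\<Sum>j<n. card {S \<in> parity_code m n A. j \<in> S})"
    by (simp add: sum.inter_filter[symmetric] finite_parity_code)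
  finally have "2 * (\<Sum>S\<in>parity_code m n A. card S) = (\<Sum>j<n. 2 * card {S \<in> parity_code m n A. j \<in> S})"
    by (simp add: sum_distrib_left)
  also have "\<dots> \<le> (\<Sum>j<n. card (parity_code m n A))"
    by (rule sum_mono) (rule card_parity_code_containing_le)
  finally show ?thesis by simp
qed

lemma plotkin_light_codeword:
  assumes "0 < n" "n + 1 \<le> card (parity_code m n A)"
  shows "\<exists>S \<in> parity_code m n A. S \<noteq> {} \<and> 2 * card S \<le> n + 1"
proof (rule ccontr)
  assume "\<not> ?thesis"
  then have heavy: "n + 2 \<le> 2 * card S" if "S \<in> parity_code m n A - {{}}" for S
    using that by fastforce
  define N where "N = card (parity_code m n A)"
  have "(N - 1) * (n + 2) = (\<Sum>S\<in>parity_code m n A - {{}}. n + 2)"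
    using empty_in_parity_code finite_parity_code by (simp add: N_def)
  also have "\<dots> \<le> (\<Sum>S\<in>parity_code m n A - {{}}. 2 * card S)"
    by (rule sum_mono) (rule heavy)
  also have "\<dots> = 2 * (\<Sum>S\<in>parity_code m n A. card S)"
    using sum.remove[OF finite_parity_code empty_in_parity_code, of card]
    by (simp add: sum_distrib_left)
  also have "\<dots> \<le> n * N"
    unfolding N_def by (rule sum_card_parity_code_le)
  finally have bound: "(N - 1) * (n + 2) \<le> n * N" .
  have "n + 1 \<le> N"
    using assms(2) by (simp add: N_def)
  then obtain N' where "N = Suc N'" "n \<le> N'"
    by (cases N) auto
  with bound show False
    using assms(1) by (simp add: algebra_simps)
qed

lemma even_colset_iff_parity_code:
  "even_colset m n A S \<longleftrightarrow> S \<in> parity_code m n A \<and> S \<noteq> {}"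
  unfolding even_colset_def parity_code_def syndrome_def by blast

lemma onefree_colset_if_even_colset:
  "even_colset m n A S \<Longrightarrow> onefree_colset m n A S"
  unfolding even_colset_def onefree_colset_def by (metis odd_one)

lemma plotkin_bound:
  assumes "0 < n" "m \<le> n" "n + 1 \<le> 2 ^ (n - m)"
  obtains S where "even_colset m n A S" "2 * card S \<le> n + 1"
  using plotkin_light_codeword[OF assms(1) order_trans[OF assms(3) card_parity_code_ge[OF assms(2)]]]
  by (auto simp: even_colset_iff_parity_code)

lemma finite_card_onefree_colsets: "finite {card S | S. onefree_colset m n A S}"
  by (rule finite_subset[of _ "card ` Pow {..<n}"]) (auto simp: onefree_colset_def)

lemma finite_card_even_colsets: "finite {card S | S. even_colset m n A S}"
  by (rule finite_subset[of _ "card ` Pow {..<n}"]) (auto simp: even_colset_def)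

lemma u_mat_le_card: "onefree_colset m n A S \<Longrightarrow> u_mat m n A \<le> card S"
  unfolding u_mat_def by (rule Min_le[OF finite_card_onefree_colsets]) blast

lemma eps_mat_le_card: "even_colset m n A S \<Longrightarrow> eps_mat m n A \<le> card S"
  unfolding eps_mat_def by (rule Min_le[OF finite_card_even_colsets]) blast

lemma u_mat_eps_mat_plotkin:
  assumes "0 < n" "m \<le> n" "n + 1 \<le> 2 ^ (n - m)"
  shows "2 * u_mat m n A \<le> n + 1" "2 * eps_mat m n A \<le> n + 1"
proof -
  obtain S where S: "even_colset m n A S" "2 * card S \<le> n + 1"
    using plotkin_bound[OF assms] .
  show "2 * u_mat m n A \<le> n + 1"
    using u_mat_le_card[OF onefree_colset_if_even_colset[OF S(1)]] S(2) by linarith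
  show "2 * eps_mat m n A \<le> n + 1"
    using eps_mat_le_card[OF S(1)] S(2) by linarith
qed

lemma le_u_mat_eps_mat:
  assumes "\<And>S. onefree_colset m n A S \<Longrightarrow> b \<le> card S" "even_colset m n A S\<^sub>0"
  shows "b \<le> u_mat m n A" "b \<le> eps_mat m n A"
proof -
  have "onefree_colset m n A S\<^sub>0"
    using assms(2) by (rule onefree_colset_if_even_colset)
  then show "b \<le> u_mat m n A"
    unfolding u_mat_def using assms(1) by (subst Min_ge_iff[OF finite_card_onefree_colsets]) auto
  show "b \<le> eps_mat m n A"
    unfolding eps_mat_def using assms onefree_colset_if_even_colset
    by (subst Min_ge_iff[OF finite_card_even_colsets]) auto
qed

lemma card_Int_triple_ne_one:
  assumes "card (T \<inter> {a, b, c}) \<noteq> 1" "distinct [a, b, c]"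
  shows "b \<in> T \<Longrightarrow> a \<in> T \<or> c \<in> T" and "b \<notin> T \<Longrightarrow> a \<in> T \<longleftrightarrow> c \<in> T"
  using assms by (cases "a \<in> T"; cases "c \<in> T"; auto simp: Int_insert_right)+

lemma card_ge_if_hits_every_pair:
  fixes H :: nat
  assumes "finite T" "H \<in> T" "\<And>w. w \<in> {1..<H} \<Longrightarrow> w \<in> T \<or> w + H \<in> T"
  shows "H \<le> card T"
proof -
  define f where "f w = (if w \<in> T then w else w + H)" for w
  have "inj_on f {1..<H}"
    by (rule inj_onI) (auto simp: f_def split: if_splits)
  moreover have "f ` {1..<H} \<subseteq> T - {H}"
    using assms(3) by (force simp: f_def)
  ultimately have "card {1..<H} \<le> card (T - {H})"
    using assms(1) by (intro card_inj_on_le) auto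
  moreover have "0 < card T"
    using assms(1,2) card_gt_0_iff by blast
  ultimately show ?thesis
    using assms(1,2) by simp
qed

lemma card_eq_double_if_shift_invariant:
  fixes H :: nat
  assumes "T \<subseteq> {1..<2 * H}" "H \<notin> T" "\<And>w. w \<in> {1..<H} \<Longrightarrow> w \<in> T \<longleftrightarrow> w + H \<in> T"
  shows "card T = 2 * card (T \<inter> {1..<H})"
proof -
  let ?low = "T \<inter> {1..<H}" and ?high = "T \<inter> {H<..<2 * H}"
  have "(\<lambda>w. w + H) ` ?low = ?high"
  proof
    show "(\<lambda>w. w + H) ` ?low \<subseteq> ?high"
      using assms(3) by auto
    show "?high \<subseteq> (\<lambda>w. w + H) ` ?low"
    proof
      fix x assume x: "x \<in> ?high"
      then have "x - H \<in> {1..<H}" "x - H + H = x" by auto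
      then have "x - H \<in> ?low"
        using assms(3)[of "x - H"] x by simp
      then show "x \<in> (\<lambda>w. w + H) ` ?low"
        using x by (intro image_eqI[where x = "x - H"]) auto
    qed
  qed
  then have "card ?high = card ?low"
    by (metis card_image inj_on_add')
  have "T = ?low \<union> ?high"
  proof
    show "T \<subseteq> ?low \<union> ?high"
    proof
      fix x assume "x \<in> T"
      with assms(1,2) have "x \<in> {1..<2 * H}" "x \<noteq> H" by auto
      with \<open>x \<in> T\<close> show "x \<in> ?low \<union> ?high" by auto
    qed
  qed auto
  then have "card T = card (?low \<union> ?high)"
    by (rule arg_cong)
  also have "\<dots> = card ?low + card ?high"
    by (rule card_Un_disjoint) auto
  finally show ?thesis
    using \<open>card ?high = card ?low\<close> by simp
qed

text \<open>Reading the points 1, ..., 2^k - 1 as the nonzero vectors of GF(2)^k, the triple (j, w) is the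
  line {w, 2^j, w XOR 2^j}.\<close>

definition triple :: "nat \<times> nat \<Rightarrow> nat set" where
  "triple = (\<lambda>(j, w). {w, 2 ^ j, w + 2 ^ j})"

definition triple_index :: "nat \<Rightarrow> (nat \<times> nat) set" where
  "triple_index k = (SIGMA j:{..<k}. {1..<2 ^ j})"

definition stopping_set :: "nat \<Rightarrow> nat set \<Rightarrow> bool" where
  "stopping_set k T \<longleftrightarrow> (\<forall>p \<in> triple_index k. card (T \<inter> triple p) \<noteq> 1)"

lemma triple_subset:
  assumes "p \<in> triple_index k"
  shows "triple p \<subseteq> {1..<2 ^ k}"
proof -
  obtain j w where p: "p = (j, w)" "j < k" "1 \<le> w" "w < 2 ^ j"
    using assms by (auto simp: triple_index_def)
  have "w + 2 ^ j < 2 ^ Suc j" using p by simp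
  also have "(2::nat) ^ Suc j \<le> 2 ^ k" using p by (intro power_increasing) auto
  finally show ?thesis using p by (auto simp: triple_def)
qed

lemma stopping_set_SucD:
  assumes "stopping_set (Suc k) T"
  shows "stopping_set k (T \<inter> {1..<2 ^ k})"
    and "\<And>w. w \<in> {1..<2 ^ k} \<Longrightarrow> card (T \<inter> {w, 2 ^ k, w + 2 ^ k}) \<noteq> 1"
proof -
  show "stopping_set k (T \<inter> {1..<2 ^ k})"
    unfolding stopping_set_def
  proof
    fix p assume p: "p \<in> triple_index k"
    then have "T \<inter> {1..<2 ^ k} \<inter> triple p = T \<inter> triple p"
      using triple_subset by blast
    moreover have "p \<in> triple_index (Suc k)"
      using p by (auto simp: triple_index_def)
    ultimately show "card (T \<inter> {1..<2 ^ k} \<inter> triple p) \<noteq> 1"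
      using assms by (simp add: stopping_set_def)
  qed
  fix w :: nat assume "w \<in> {1..<2 ^ k}"
  then have "(k, w) \<in> triple_index (Suc k)"
    by (simp add: triple_index_def)
  then show "card (T \<inter> {w, 2 ^ k, w + 2 ^ k}) \<noteq> 1"
    using assms by (auto simp: stopping_set_def triple_def)
qed

lemma stopping_set_card_ge:
  "T \<subseteq> {1..<2 ^ k} \<Longrightarrow> T \<noteq> {} \<Longrightarrow> stopping_set k T \<Longrightarrow> 2 ^ k \<le> 2 * card T"
proof (induction k arbitrary: T)
  case 0
  then show ?case by auto
next
  case (Suc k)
  define H :: nat where "H = 2 ^ k"
  have fin: "finite T"
    using Suc.prems(1) by (rule finite_subset) simp
  have distinct: "distinct [w, H, w + H]" if "w \<in> {1..<H}" for w
    using that by auto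
  have hit: "card (T \<inter> {w, H, w + H}) \<noteq> 1" if "w \<in> {1..<H}" for w
    using stopping_set_SucD(2)[OF Suc.prems(3)] that by (simp add: H_def)
  show ?case
  proof (cases "H \<in> T")
    case True
    then have "H \<le> card T"
      using card_Int_triple_ne_one(1)[OF hit distinct]
      by (intro card_ge_if_hits_every_pair[OF fin True]) blast
    then show ?thesis by (simp add: H_def)
  next
    case False
    then have double: "card T = 2 * card (T \<inter> {1..<H})"
      using Suc.prems(1) card_Int_triple_ne_one(2)[OF hit distinct]
      by (intro card_eq_double_if_shift_invariant) (auto simp: H_def)
    then have "T \<inter> {1..<H} \<noteq> {}"
      using fin Suc.prems(2) by auto
    then have "2 ^ k \<le> 2 * card (T \<inter> {1..<H})"
      using Suc.IH stopping_set_SucD(1)[OF Suc.prems(3)] by (simp add: H_def)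
    then show ?thesis
      using double by simp
  qed
qed

lemma card_triple_index: "card (triple_index k) = 2 ^ k - 1 - k"
proof -
  have "card (triple_index k) = (\<Sum>j<k. 2 ^ j - 1)"
    by (simp add: triple_index_def)
  also have "\<dots> = (\<Sum>j<k. 2 ^ j) - k"
    by (simp add: sum_subtractf_nat)
  also have "(\<Sum>j<k. (2::nat) ^ j) = 2 ^ k - 1"
    using sum_power2[of k] by (simp add: atLeast0LessThan)
  finally show ?thesis .
qed

lemma sum_indicator_eq_card_image:
  assumes "inj f" "finite S"
  shows "(\<Sum>c\<in>S. if f c \<in> L then 1 else 0) = card (f ` S \<inter> L)"
proof -
  have "(\<Sum>c\<in>S. if f c \<in> L then 1 else 0) = card {c \<in> S. f c \<in> L}"
    using assms(2) by (simp add: sum.inter_filter[symmetric])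
  also have "\<dots> = card (f ` {c \<in> S. f c \<in> L})"
    using assms(1) by (simp add: card_image inj_on_subset)
  also have "f ` {c \<in> S. f c \<in> L} = f ` S \<inter> L"
    by auto
  finally show ?thesis .
qed

lemma exists_matrix_with_large_stopping_sets:
  "\<exists>A. binary_matrix (2 ^ k - 1 - k) (2 ^ k - 1) A \<and>
     (\<forall>S. onefree_colset (2 ^ k - 1 - k) (2 ^ k - 1) A S \<longrightarrow> 2 ^ k \<le> 2 * card S)"
proof -
  have "finite (triple_index k)"
    by (simp add: triple_index_def)
  then obtain h where "bij_betw h {0..<card (triple_index k)} (triple_index k)"
    using ex_bij_betw_nat_finite by blast
  then have h: "bij_betw h {0..<2 ^ k - 1 - k} (triple_index k)"
    by (simp only: card_triple_index)
  define A :: "nat \<Rightarrow> nat \<Rightarrow> nat" where "A i c = (if Suc c \<in> triple (h i) then 1 else 0)" for i c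
  have "2 ^ k \<le> 2 * card S" if S: "onefree_colset (2 ^ k - 1 - k) (2 ^ k - 1) A S" for S
  proof -
    have S_cols: "S \<subseteq> {..<2 ^ k - 1}" "S \<noteq> {}"
      and no_one: "\<And>i. i < 2 ^ k - 1 - k \<Longrightarrow> (\<Sum>c\<in>S. A i c) \<noteq> 1"
      using S by (auto simp: onefree_colset_def)
    have fin: "finite S"
      using S_cols(1) by (rule finite_subset) simp
    have "stopping_set k (Suc ` S)"
      unfolding stopping_set_def
    proof
      fix p assume "p \<in> triple_index k"
      then obtain i where "i < 2 ^ k - 1 - k" "p = h i"
        using bij_betw_imp_surj_on[OF h] by force
      then show "card (Suc ` S \<inter> triple p) \<noteq> 1"
        using no_one[of i] sum_indicator_eq_card_image[OF inj_Suc fin] by (simp add: A_def)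
    qed
    moreover have "Suc ` S \<subseteq> {1..<2 ^ k}"
      using S_cols(1) by auto
    ultimately have "2 ^ k \<le> 2 * card (Suc ` S)"
      using S_cols(2) by (intro stopping_set_card_ge) auto
    then show ?thesis
      by (simp add: card_image)
  qed
  moreover have "binary_matrix (2 ^ k - 1 - k) (2 ^ k - 1) A"
    by (simp add: binary_matrix_def A_def)
  ultimately show ?thesis by blast
qed

lemma Max_eq_if_attained:
  fixes f :: "'a \<Rightarrow> nat"
  assumes "\<And>x. P x \<Longrightarrow> f x \<le> b" "P x\<^sub>0" "f x\<^sub>0 = b"
  shows "Max {f x | x. P x} = b"
proof (rule Max_eqI)
  show "finite {f x | x. P x}"
    by (rule finite_subset[of _ "{..b}"]) (auto dest: assms(1))
qed (use assms in auto)

theorem theorem6p1: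
  fixes k :: nat
  assumes "k \<ge> 2"
  shows "u_max (2^k - 1 - k) (2^k - 1) = eps_max (2^k - 1 - k) (2^k - 1)
         \<and> eps_max (2^k - 1 - k) (2^k - 1) = 2^(k - 1)"
proof -
  define m n :: nat where "m = 2 ^ k - 1 - k" and "n = 2 ^ k - 1"
  have "k < 2 ^ k" by (rule less_exp)
  then have "0 < n" "m \<le> n" "n - m = k" "n + 1 = 2 ^ k"
    using assms unfolding m_def n_def by linarith+
  then have dims: "0 < n" "m \<le> n" "n + 1 \<le> 2 ^ (n - m)"
    by simp_all
  have n_plus_one: "n + 1 = 2 * 2 ^ (k - 1)"
    using assms by (cases k) (simp_all add: n_def)
  have upper: "u_mat m n A \<le> 2 ^ (k - 1)" "eps_mat m n A \<le> 2 ^ (k - 1)" for A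
    using u_mat_eps_mat_plotkin[OF dims, of A] n_plus_one by simp_all
  obtain A\<^sub>0 where A\<^sub>0: "binary_matrix m n A\<^sub>0"
    and "\<And>S. onefree_colset m n A\<^sub>0 S \<Longrightarrow> 2 ^ (k - 1) \<le> card S"
    using exists_matrix_with_large_stopping_sets[of k] n_plus_one by (auto simp: m_def n_def)
  moreover obtain S\<^sub>0 where "even_colset m n A\<^sub>0 S\<^sub>0"
    using plotkin_bound[OF dims] .
  ultimately have "u_mat m n A\<^sub>0 = 2 ^ (k - 1)" "eps_mat m n A\<^sub>0 = 2 ^ (k - 1)"
    using le_u_mat_eps_mat upper le_antisym by metis+
  then have "u_max m n = 2 ^ (k - 1)" "eps_max m n = 2 ^ (k - 1)"
    unfolding u_max_def eps_max_def using upper A\<^sub>0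
    by (auto intro!: Max_eq_if_attained[where x\<^sub>0 = A\<^sub>0])
  then show ?thesis
    by (simp add: m_def n_def)
qed

end
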